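(* (i) For a first countable topological space $(X,\tau)$ the following are equivalent: (1) $X$ is Hausdorff; (2) $X$ is a kd-space; (3) $X$ is a kc-space; (4) $X$ is a US-space. (ii) A semi-regular topological space $(X,\tau)$ is a kd-space if and only if it is a kc-space.
   Context: $X$ is a kc-space if every compact subset of $X$ is closed; $X$ is a kd-space if every compact subset of $X$ is $\delta$-closed, where $A$ is $\delta$-closed if every point $x$ such that $A\cap U\ne\emptyset$ for all regular open $U\ni x$ (regular open meaning $U=\mathrm{Int}(\mathrm{Cl}(U))$) belongs to $A$. $X$ is a US-space (unique sequence space) if every convergent sequence has a unique limit. $X$ is semi-regular if the regular open sets form a base for $\tau$. *)

theory Defs
  imports "HOL-Analysis.Analysis"
begin

definition regular_openin :: "'a topology \<Rightarrow> 'a set \<Rightarrow> bool" where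
  "regular_openin X U \<longleftrightarrow> U = X interior_of (X closure_of U)"

definition delta_closedin :: "'a topology \<Rightarrow> 'a set \<Rightarrow> bool" where
  "delta_closedin X A \<longleftrightarrow> A \<subseteq> topspace X \<and>
     (\<forall>x \<in> topspace X. (\<forall>U. regular_openin X U \<and> x \<in> U \<longrightarrow> A \<inter> U \<noteq> {}) \<longrightarrow> x \<in> A)"

definition kd_space :: "'a topology \<Rightarrow> bool" where
  "kd_space X \<longleftrightarrow> (\<forall>K. compactin X K \<longrightarrow> delta_closedin X K)"

definition US_space :: "'a topology \<Rightarrow> bool" where
  "US_space X \<longleftrightarrow> (\<forall>(s :: nat \<Rightarrow> 'a) l m. (\<forall>n. s n \<in> topspace X) \<and>
      limitin X s l sequentially \<and> limitin X s m sequentially \<longrightarrow> l = m)"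

definition semi_regular :: "'a topology \<Rightarrow> bool" where
  "semi_regular X \<longleftrightarrow> (\<forall>U x. openin X U \<and> x \<in> U \<longrightarrow>
      (\<exists>V. regular_openin X V \<and> x \<in> V \<and> V \<subseteq> U))"

end

theory Submission
  imports Defs
begin

text \<open>In a first countable space a sequence that meets the n-th members of decreasing
  neighbourhood bases of two points x and y converges to both, so uniqueness of sequential
  limits forces Hausdorffness; this closes the chain Hausdorff \<Longrightarrow> kd \<Longrightarrow> kc \<Longrightarrow> US.
  Hausdorff spaces are kd because a point outside a compact set K has a neighbourhood V
  whose closure misses K, and then the interior of that closure is a regular open
  neighbourhood missing K. In a semi-regular space the regular open sets form a base,
  so delta-closed and closed sets coincide.\<close>

lemma regular_openin_interior_of_closure_of:
  "regular_openin X (X interior_of (X closure_of S))"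
proof -
  let ?W = "X interior_of (X closure_of S)"
  have "X closure_of ?W \<subseteq> X closure_of S"
    by (metis closure_of_closure_of closure_of_mono interior_of_subset)
  then have "X interior_of (X closure_of ?W) \<subseteq> ?W"
    by (rule interior_of_mono)
  moreover have "?W \<subseteq> X interior_of (X closure_of ?W)"
    by (meson closure_of_subset interior_of_maximal openin_interior_of openin_subset)
  ultimately show ?thesis
    unfolding regular_openin_def by blast
qed

lemma regular_openin_imp_openin: "regular_openin X U \<Longrightarrow> openin X U"
  unfolding regular_openin_def by (metis openin_interior_of)

lemma delta_closedin_imp_closedin:
  assumes "delta_closedin X A"
  shows "closedin X A"
proof -
  have "openin X (topspace X - A)"
    unfolding openin_subopen[of X "topspace X - A"]
  proof
    fix x assume "x \<in> topspace X - A"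
    then obtain U where "regular_openin X U" "x \<in> U" "A \<inter> U = {}"
      using assms unfolding delta_closedin_def by blast
    then show "\<exists>T. openin X T \<and> x \<in> T \<and> T \<subseteq> topspace X - A"
      using regular_openin_imp_openin[of X U] openin_subset[of X U] by blast
  qed
  then show ?thesis
    using assms by (simp add: closedin_def delta_closedin_def)
qed

lemma semi_regular_closedin_imp_delta_closedin:
  assumes "semi_regular X" and "closedin X A"
  shows "delta_closedin X A"
  unfolding delta_closedin_def
proof (intro conjI ballI impI)
  show "A \<subseteq> topspace X"
    using assms(2) by (rule closedin_subset)
next
  fix x assume x: "x \<in> topspace X"
    and meets: "\<forall>U. regular_openin X U \<and> x \<in> U \<longrightarrow> A \<inter> U \<noteq> {}"
  show "x \<in> A"
  proof (rule ccontr)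
    assume "x \<notin> A"
    with assms x obtain V where "regular_openin X V" "x \<in> V" "V \<subseteq> topspace X - A"
      unfolding semi_regular_def closedin_def by blast
    with meets show False by blast
  qed
qed

lemma kd_space_imp_kc_space: "kd_space X \<Longrightarrow> kc_space X"
  unfolding kd_space_def kc_space_def by (blast intro: delta_closedin_imp_closedin)

lemma semi_regular_kd_space_iff_kc_space:
  "semi_regular X \<Longrightarrow> kd_space X \<longleftrightarrow> kc_space X"
  unfolding kd_space_def kc_space_def
  by (blast intro: delta_closedin_imp_closedin semi_regular_closedin_imp_delta_closedin)

lemma Hausdorff_space_imp_kd_space:
  assumes "Hausdorff_space X"
  shows "kd_space X"
  unfolding kd_space_def delta_closedin_def
proof (intro allI impI conjI ballI)
  fix K assume K: "compactin X K"
  then show "K \<subseteq> topspace X"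
    by (rule compactin_subset_topspace)
  fix x assume x: "x \<in> topspace X"
    and meets: "\<forall>U. regular_openin X U \<and> x \<in> U \<longrightarrow> K \<inter> U \<noteq> {}"
  show "x \<in> K"
  proof (rule ccontr)
    assume "x \<notin> K"
    then have "disjnt K {x}" by simp
    moreover have "compactin X {x}" using x by simp
    ultimately obtain U V where UV: "openin X U" "openin X V" "K \<subseteq> U" "{x} \<subseteq> V" "disjnt U V"
      using Hausdorff_space_compact_separation[OF assms K] by metis
    let ?W = "X interior_of (X closure_of V)"
    have "V \<subseteq> ?W"
      using UV(2) by (simp add: interior_of_maximal closure_of_subset openin_subset)
    then have "x \<in> ?W"
      using UV(4) by blast
    moreover have "U \<inter> X closure_of V = {}"
      using openin_Int_closure_of_eq_empty[OF UV(1)] UV(5) by (simp add: disjnt_def)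
    then have "K \<inter> ?W = {}"
      using UV(3) interior_of_subset[of X "X closure_of V"] by blast
    ultimately show False
      using meets regular_openin_interior_of_closure_of[of X V] by blast
  qed
qed

lemma kc_space_imp_US_space: "kc_space X \<Longrightarrow> US_space X"
  unfolding US_space_def by (meson limitin_kc_unique)

lemma first_countable_decreasing_neighbourhood_base:
  assumes "first_countable X" and x: "x \<in> topspace X"
  obtains U :: "nat \<Rightarrow> 'a set"
  where "\<And>n. openin X (U n)" "\<And>n. x \<in> U n" "decseq U"
    "\<And>W. openin X W \<Longrightarrow> x \<in> W \<Longrightarrow> \<exists>n. U n \<subseteq> W"
proof -
  have "\<exists>\<B>. countable \<B> \<and> (\<forall>V \<in> \<B>. openin X V) \<and>
      (\<forall>W. openin X W \<and> x \<in> W \<longrightarrow> (\<exists>V \<in> \<B>. x \<in> V \<and> V \<subseteq> W))"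
    using assms unfolding first_countable_def by (rule bspec)
  then obtain \<B> where "countable \<B>" and opens: "\<forall>V \<in> \<B>. openin X V"
    and base: "\<forall>W. openin X W \<and> x \<in> W \<longrightarrow> (\<exists>V \<in> \<B>. x \<in> V \<and> V \<subseteq> W)"
    by blast
  \<comment> \<open>topspace X makes \<B>' nonempty, so that from_nat_into enumerates it\<close>
  define \<B>' where "\<B>' = insert (topspace X) {V \<in> \<B>. x \<in> V}"
  define b where "b = from_nat_into \<B>'"
  have "countable \<B>'"
    unfolding \<B>'_def using \<open>countable \<B>\<close> by simp
  then have range_b: "range b = \<B>'"
    unfolding b_def by (simp add: range_from_nat_into \<B>'_def)
  have b: "openin X (b k) \<and> x \<in> b k" for k
  proof -
    have "b k \<in> \<B>'"
      using range_b by blast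
    then show ?thesis
      using opens x unfolding \<B>'_def by auto
  qed
  define U where "U n = \<Inter> (b ` {..n})" for n
  show thesis
  proof
    show "openin X (U n)" for n
      unfolding U_def using b by (intro openin_Inter) auto
    show "x \<in> U n" for n
      unfolding U_def using b by blast
    show "decseq U"
      unfolding U_def decseq_def by auto
    show "\<exists>n. U n \<subseteq> W" if W: "openin X W" "x \<in> W" for W
    proof -
      obtain V where "V \<in> \<B>" "x \<in> V" "V \<subseteq> W"
        using base W by blast
      then have "V \<in> range b"
        unfolding range_b \<B>'_def by blast
      then obtain k where "V = b k"
        by blast
      then show ?thesis
        unfolding U_def using \<open>V \<subseteq> W\<close> by blast
    qed
  qed
qed

lemma limitin_sequentially_decreasing_neighbourhood_base:
  assumes "x \<in> topspace X" "decseq U" "\<And>W. openin X W \<Longrightarrow> x \<in> W \<Longrightarrow> \<exists>n. U n \<subseteq> W"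
    and "\<And>n. s n \<in> U n"
  shows "limitin X s x sequentially"
  unfolding limitin_sequentially
proof (intro conjI allI impI \<open>x \<in> topspace X\<close>)
  fix W assume "openin X W \<and> x \<in> W"
  then obtain k where "U k \<subseteq> W"
    using assms(3) by blast
  then have "\<forall>n\<ge>k. s n \<in> W"
    using assms(2,4) unfolding decseq_def by blast
  then show "\<exists>N. \<forall>n\<ge>N. s n \<in> W" by blast
qed

lemma first_countable_US_space_imp_Hausdorff_space:
  assumes "first_countable X" and "US_space X"
  shows "Hausdorff_space X"
  unfolding Hausdorff_space_def
proof (intro allI impI)
  fix x y assume "x \<in> topspace X \<and> y \<in> topspace X \<and> x \<noteq> y"
  then have x: "x \<in> topspace X" and y: "y \<in> topspace X" and "x \<noteq> y"
    by auto
  obtain U where U: "\<And>n. openin X (U n)" "\<And>n. x \<in> U n" "decseq U"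
    "\<And>W. openin X W \<Longrightarrow> x \<in> W \<Longrightarrow> \<exists>n. U n \<subseteq> W"
    by (rule first_countable_decreasing_neighbourhood_base[OF assms(1) x]) blast
  obtain V where V: "\<And>n. openin X (V n)" "\<And>n. y \<in> V n" "decseq V"
    "\<And>W. openin X W \<Longrightarrow> y \<in> W \<Longrightarrow> \<exists>n. V n \<subseteq> W"
    by (rule first_countable_decreasing_neighbourhood_base[OF assms(1) y]) blast
  show "\<exists>U V. openin X U \<and> openin X V \<and> x \<in> U \<and> y \<in> V \<and> disjnt U V"
  proof (rule ccontr)
    assume no_separation: "\<not> ?thesis"
    have "\<exists>z. z \<in> U n \<inter> V n" for n
      using U(1,2) V(1,2) no_separation unfolding disjnt_def by blast
    then obtain s where s: "\<And>n. s n \<in> U n \<inter> V n"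
      by metis
    then have sU: "\<And>n. s n \<in> U n" and sV: "\<And>n. s n \<in> V n"
      by auto
    have "limitin X s x sequentially"
      by (rule limitin_sequentially_decreasing_neighbourhood_base[OF x U(3,4) sU])
    moreover have "limitin X s y sequentially"
      by (rule limitin_sequentially_decreasing_neighbourhood_base[OF y V(3,4) sV])
    moreover have "s n \<in> topspace X" for n
      using sU openin_subset[OF U(1)] by blast
    ultimately have "x = y"
      using \<open>US_space X\<close> unfolding US_space_def by blast
    with \<open>x \<noteq> y\<close> show False ..
  qed
qed

theorem mainTheorem4:
  shows "(\<forall>X :: 'a topology. first_countable X \<longrightarrow>
            ((Hausdorff_space X \<longleftrightarrow> kd_space X) \<and>
             (kd_space X \<longleftrightarrow> kc_space X) \<and>
             (kc_space X \<longleftrightarrow> US_space X)))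
       \<and> (\<forall>X :: 'a topology. semi_regular X \<longrightarrow> (kd_space X \<longleftrightarrow> kc_space X))"
proof (rule conjI; intro allI impI)
  fix X :: "'a topology"
  assume "first_countable X"
  then have "US_space X \<Longrightarrow> Hausdorff_space X"
    by (rule first_countable_US_space_imp_Hausdorff_space)
  then show "(Hausdorff_space X \<longleftrightarrow> kd_space X) \<and> (kd_space X \<longleftrightarrow> kc_space X) \<and>
      (kc_space X \<longleftrightarrow> US_space X)"
    using Hausdorff_space_imp_kd_space kd_space_imp_kc_space kc_space_imp_US_space by blast
next
  fix X :: "'a topology"
  assume "semi_regular X"
  then show "kd_space X \<longleftrightarrow> kc_space X"
    by (rule semi_regular_kd_space_iff_kc_space)
qed

end
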